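(* Let $U$ be a finite set of attributes, $\varphi$ a standard closure operator on $U$, and $X\subseteq U$. Let $\mathrm{LCD}(Y,\Sigma)$ denote the output of the algorithm LinClosureDirect described below on input set $Y\subseteq U$ and implication set $\Sigma$. (i) If $\Sigma$ is the canonical direct unit basis of $\varphi$, then $\mathrm{LCD}(X,\Sigma)=\varphi(X)$. (ii) If $\Sigma$ is the D-basis of $\varphi$, then $\mathrm{LCD}(\varphi_0(X),\Sigma)=\varphi(X)$.
   Context: An implication over $U$ is a pair $A\to B$ with $A,B\subseteq U$; closure $\Sigma(X)$ w.r.t. a set of implications $\Sigma$ is the smallest superset of $X$ that contains $B$ whenever it contains $A$, for each $A\to B\in\Sigma$. A closure operator $\varphi$ on $U$ is standard if for every $a\in U$ the set $\varphi(a)\setminus\{a\}$ is closed, and $\varphi(a)\neq\varphi(b)$ for $a\neq b$. For $c\in U$, $A\subseteq U$ is a minimal generator of $c$ if $c\in\varphi(A)$, $c\notin A$, and no proper subset $A'\subsetneq A$ has $c\in\varphi(A')$. Canonical direct unit basis: $\{A\to c \mid c\in U,\ A \text{ a minimal generator of } c\}$. D-basis: let $\Sigma_0=\{a\to c\mid a,c\in U,\ c\in\varphi(a)\setminus\{a\}\}$ and $\varphi_0(X)$ the closure of $X$ w.r.t. $\Sigma_0$. A minimal generator $A$ of $c$ with $|A|\ge2$ is a minimal D-generator of $c$ if $c\notin\varphi_0(A)$ and for every minimal generator $A'$ of $c$, $A'\subseteq\varphi_0(A)$ implies $A'=A$. The D-basis is $\Sigma_0\cup\{A\to c\mid c\in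 U,\ A\text{ a minimal D-generator of }c\}$. In both bases, implications with equal left-hand side may be merged into a single implication whose right-hand side is the union; all left-hand sides are nonempty. Algorithm LinClosureDirect on input $(Y,\Sigma)$: for each $A\to B\in\Sigma$ set $count[A\to B]:=|A|$, and for each $a\in U$ let $list[a]$ be the set of implications $A\to B\in\Sigma$ with $a\in A$. Set $update:=Y$ and $add:=\emptyset$. While $update\neq\emptyset$: choose $m\in update$, remove $m$ from $update$, and for each $A\to B\in list[m]$ decrement $count[A\to B]$ by one and, if it becomes $0$, set $add:=add\cup B$. Return $Y\cup add$. (Note $update$ is never enlarged.) *)

theory Defs
  imports Main
begin

type_synonym 'a imp = "'a set \<times> 'a set"

definition closure_operator :: "'a set \<Rightarrow> ('a set \<Rightarrow> 'a set) \<Rightarrow> bool" where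
  "closure_operator U \<phi> \<longleftrightarrow>
     (\<forall>X. X \<subseteq> U \<longrightarrow> X \<subseteq> \<phi> X \<and> \<phi> X \<subseteq> U \<and> \<phi> (\<phi> X) = \<phi> X) \<and>
     (\<forall>X Y. X \<subseteq> Y \<and> Y \<subseteq> U \<longrightarrow> \<phi> X \<subseteq> \<phi> Y)"

definition is_closed :: "('a set \<Rightarrow> 'a set) \<Rightarrow> 'a set \<Rightarrow> bool" where
  "is_closed \<phi> X \<longleftrightarrow> \<phi> X = X"

definition standard :: "'a set \<Rightarrow> ('a set \<Rightarrow> 'a set) \<Rightarrow> bool" where
  "standard U \<phi> \<longleftrightarrow>
     (\<forall>a\<in>U. is_closed \<phi> (\<phi> {a} - {a})) \<and>
     (\<forall>a\<in>U. \<forall>b\<in>U. a \<noteq> b \<longrightarrow> \<phi> {a} \<noteq> \<phi> {b})"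

definition imp_closure :: "'a imp set \<Rightarrow> 'a set \<Rightarrow> 'a set" where
  "imp_closure \<Sigma> X = \<Inter> {Z. X \<subseteq> Z \<and> (\<forall>(A, B)\<in>\<Sigma>. A \<subseteq> Z \<longrightarrow> B \<subseteq> Z)}"

definition min_gen :: "'a set \<Rightarrow> ('a set \<Rightarrow> 'a set) \<Rightarrow> 'a set \<Rightarrow> 'a \<Rightarrow> bool" where
  "min_gen U \<phi> A c \<longleftrightarrow> A \<subseteq> U \<and> c \<in> \<phi> A \<and> c \<notin> A \<and> (\<forall>A'. A' \<subset> A \<longrightarrow> c \<notin> \<phi> A')"

definition canonical_direct_unit_basis :: "'a set \<Rightarrow> ('a set \<Rightarrow> 'a set) \<Rightarrow> 'a imp set" where
  "canonical_direct_unit_basis U \<phi> = {(A, {c}) | A c. c \<in> U \<and> min_gen U \<phi> A c}"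

definition Sigma0 :: "'a set \<Rightarrow> ('a set \<Rightarrow> 'a set) \<Rightarrow> 'a imp set" where
  "Sigma0 U \<phi> = {({a}, {c}) | a c. a \<in> U \<and> c \<in> U \<and> c \<in> \<phi> {a} - {a}}"

definition phi0 :: "'a set \<Rightarrow> ('a set \<Rightarrow> 'a set) \<Rightarrow> 'a set \<Rightarrow> 'a set" where
  "phi0 U \<phi> X = imp_closure (Sigma0 U \<phi>) X"

definition min_D_gen :: "'a set \<Rightarrow> ('a set \<Rightarrow> 'a set) \<Rightarrow> 'a set \<Rightarrow> 'a \<Rightarrow> bool" where
  "min_D_gen U \<phi> A c \<longleftrightarrow> min_gen U \<phi> A c \<and> card A \<ge> 2 \<and> c \<notin> phi0 U \<phi> A \<and>
     (\<forall>A'. min_gen U \<phi> A' c \<and> A' \<subseteq> phi0 U \<phi> A \<longrightarrow> A' = A)"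

definition D_basis :: "'a set \<Rightarrow> ('a set \<Rightarrow> 'a set) \<Rightarrow> 'a imp set" where
  "D_basis U \<phi> = Sigma0 U \<phi> \<union> {(A, {c}) | A c. c \<in> U \<and> min_D_gen U \<phi> A c}"

text \<open>The nondeterministic choice of m is modelled by an enumeration list of Y (each element
  processed exactly once, as update is never enlarged).\<close>
definition lcd_step :: "'a imp set \<Rightarrow> 'a \<Rightarrow> ('a imp \<Rightarrow> nat) \<times> 'a set \<Rightarrow> ('a imp \<Rightarrow> nat) \<times> 'a set" where
  "lcd_step \<Sigma> m st = (let count = fst st; add = snd st;
      count' = (\<lambda>i. if i \<in> \<Sigma> \<and> m \<in> fst i then count i - 1 else count i)
    in (count', add \<union> \<Union> {snd i | i. i \<in> \<Sigma> \<and> m \<in> fst i \<and> count' i = 0}))"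

definition lcd_init :: "'a imp set \<Rightarrow> ('a imp \<Rightarrow> nat) \<times> 'a set" where
  "lcd_init \<Sigma> = ((\<lambda>i. card (fst i)), {})"

definition LinClosureDirect :: "'a imp set \<Rightarrow> 'a list \<Rightarrow> 'a set" where
  "LinClosureDirect \<Sigma> order = set order \<union> snd (fold (lcd_step \<Sigma>) order (lcd_init \<Sigma>))"

end

theory Submission
  imports Defs
begin

text \<open>Run on a distinct enumeration of \<open>Y\<close>, LinClosureDirect fires exactly the implications whose
  nonempty premise lies in \<open>Y\<close>, so it returns \<open>Y\<close> together with their conclusions. This is
  \<open>\<phi> Y\<close> as soon as every \<open>c \<in> \<phi> Y - Y\<close> is the conclusion of a basis implication with premise
  inside \<open>Y\<close>. For the canonical direct unit basis any minimal generator of \<open>c\<close> inside \<open>Y\<close> will do.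
  For the D-basis, \<open>Y = \<phi>\<^sub>0(X)\<close> is closed under the unit implications, and a minimal generator
  \<open>A \<subseteq> Y\<close> of \<open>c\<close> whose \<open>\<phi>\<^sub>0\<close>-closure is inclusion-minimal is a minimal D-generator:
  standardness makes \<open>a \<in> \<phi> {b}\<close> a partial order on \<open>U\<close>, \<open>\<phi>\<^sub>0(A)\<close> is the down-set of \<open>A\<close>,
  and a minimal generator is an antichain, hence determined by its down-set.\<close>

text \<open>Implications with empty premise never fire in LinClosureDirect: their counter starts at 0
  and is never decremented.\<close>
definition fired :: "'a imp set \<Rightarrow> 'a set \<Rightarrow> 'a set" where
  "fired \<Sigma> Y = \<Union> {B | A B. (A, B) \<in> \<Sigma> \<and> A \<noteq> {} \<and> A \<subseteq> Y}"

definition lcd_state :: "'a imp set \<Rightarrow> 'a set \<Rightarrow> ('a imp \<Rightarrow> nat) \<times> 'a set" where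
  "lcd_state \<Sigma> Y = (\<lambda>i. if i \<in> \<Sigma> then card (fst i - Y) else card (fst i), fired \<Sigma> Y)"

lemma lcd_init_eq_lcd_state: "lcd_init \<Sigma> = lcd_state \<Sigma> {}"
  by (auto simp: lcd_init_def lcd_state_def fired_def fun_eq_iff)

lemma lcd_step_lcd_state:
  assumes fin: "\<forall>(A, B)\<in>\<Sigma>. finite A" and "m \<notin> Y"
  shows "lcd_step \<Sigma> m (lcd_state \<Sigma> Y) = lcd_state \<Sigma> (insert m Y)"
proof -
  let ?count = "\<lambda>Y i. if i \<in> \<Sigma> then card (fst i - Y) else card (fst i)"
  have decrement:
    "(if i \<in> \<Sigma> \<and> m \<in> fst i then ?count Y i - 1 else ?count Y i) = ?count (insert m Y) i" for i
    using fin \<open>m \<notin> Y\<close> by (cases i) (auto simp: card_Diff_singleton_if simp flip: Diff_insert2)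
  have fires: "?count (insert m Y) i = 0 \<longleftrightarrow> fst i \<subseteq> insert m Y" if "i \<in> \<Sigma>" for i
    using that fin by (cases i) (auto simp: card_eq_0_iff)
  have "fired \<Sigma> Y \<union> \<Union> {snd i | i. i \<in> \<Sigma> \<and> m \<in> fst i \<and> ?count (insert m Y) i = 0} =
        fired \<Sigma> (insert m Y)"
  proof (intro equalityI subsetI)
    fix x assume "x \<in> fired \<Sigma> Y \<union> \<Union> {snd i | i. i \<in> \<Sigma> \<and> m \<in> fst i \<and> ?count (insert m Y) i = 0}"
    then obtain A B where "(A, B) \<in> \<Sigma>" "x \<in> B"
      and "A \<noteq> {} \<and> A \<subseteq> Y \<or> m \<in> A \<and> ?count (insert m Y) (A, B) = 0"
      by (auto simp: fired_def)
    then show "x \<in> fired \<Sigma> (insert m Y)"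
      using fires[of "(A, B)"] by (auto simp: fired_def)
  next
    fix x assume "x \<in> fired \<Sigma> (insert m Y)"
    then obtain A B where AB: "(A, B) \<in> \<Sigma>" "A \<noteq> {}" "A \<subseteq> insert m Y" "x \<in> B"
      by (auto simp: fired_def)
    show "x \<in> fired \<Sigma> Y \<union> \<Union> {snd i | i. i \<in> \<Sigma> \<and> m \<in> fst i \<and> ?count (insert m Y) i = 0}"
    proof (cases "m \<in> A")
      case True
      then have "B \<in> {snd i | i. i \<in> \<Sigma> \<and> m \<in> fst i \<and> ?count (insert m Y) i = 0}"
        using AB fires[of "(A, B)"] by force
      then show ?thesis using AB by blast
    next
      case False
      then show ?thesis using AB unfolding fired_def by blast
    qed
  qed
  then show ?thesis
    unfolding lcd_step_def lcd_state_def Let_def fst_conv snd_conv by (simp only: decrement)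
qed

lemma fold_lcd_step_lcd_state:
  assumes "\<forall>(A, B)\<in>\<Sigma>. finite A" and "distinct xs" and "set xs \<inter> Y = {}"
  shows "fold (lcd_step \<Sigma>) xs (lcd_state \<Sigma> Y) = lcd_state \<Sigma> (Y \<union> set xs)"
  using assms(2,3)
proof (induction xs arbitrary: Y)
  case (Cons m xs)
  then show ?case
    using lcd_step_lcd_state[OF assms(1), of m Y] by simp
qed simp

lemma LinClosureDirect_eq:
  assumes "\<forall>(A, B)\<in>\<Sigma>. finite A" and "distinct xs"
  shows "LinClosureDirect \<Sigma> xs = set xs \<union> fired \<Sigma> (set xs)"
  using fold_lcd_step_lcd_state[OF assms, of "{}"]
  by (simp add: LinClosureDirect_def lcd_init_eq_lcd_state lcd_state_def)

lemma imp_closure_incr: "X \<subseteq> imp_closure \<Sigma> X"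
  by (auto simp: imp_closure_def)

lemma imp_closure_least:
  "X \<subseteq> Z \<Longrightarrow> \<forall>(A, B)\<in>\<Sigma>. A \<subseteq> Z \<longrightarrow> B \<subseteq> Z \<Longrightarrow> imp_closure \<Sigma> X \<subseteq> Z"
  unfolding imp_closure_def by blast

lemma imp_closure_closed:
  "(A, B) \<in> \<Sigma> \<Longrightarrow> A \<subseteq> imp_closure \<Sigma> X \<Longrightarrow> B \<subseteq> imp_closure \<Sigma> X"
  unfolding imp_closure_def by blast

definition valid_imps :: "'a set \<Rightarrow> ('a set \<Rightarrow> 'a set) \<Rightarrow> 'a imp set \<Rightarrow> bool" where
  "valid_imps U \<phi> \<Sigma> \<longleftrightarrow> (\<forall>(A, B)\<in>\<Sigma>. A \<subseteq> U \<and> B \<subseteq> \<phi> A)"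

lemma valid_imps_finite_premises:
  assumes "finite U" and "valid_imps U \<phi> \<Sigma>"
  shows "\<forall>(A, B)\<in>\<Sigma>. finite A"
proof clarify
  fix A B assume "(A, B) \<in> \<Sigma>"
  then have "A \<subseteq> U" using assms(2) by (auto simp: valid_imps_def)
  then show "finite A" using assms(1) by (rule finite_subset)
qed

locale closure_space =
  fixes U :: "'a set" and \<phi> :: "'a set \<Rightarrow> 'a set"
  assumes closure_operator: "closure_operator U \<phi>"
begin

lemma closure_incr: "X \<subseteq> U \<Longrightarrow> X \<subseteq> \<phi> X"
  using closure_operator by (simp add: closure_operator_def)

lemma closure_subset_ground: "X \<subseteq> U \<Longrightarrow> \<phi> X \<subseteq> U"
  using closure_operator by (simp add: closure_operator_def)

lemma closure_idem: "X \<subseteq> U \<Longrightarrow> \<phi> (\<phi> X) = \<phi> X"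
  using closure_operator by (simp add: closure_operator_def)

lemma closure_mono: "X \<subseteq> Y \<Longrightarrow> Y \<subseteq> U \<Longrightarrow> \<phi> X \<subseteq> \<phi> Y"
  using closure_operator by (simp add: closure_operator_def)

lemma closure_subset_closure: "A \<subseteq> \<phi> B \<Longrightarrow> B \<subseteq> U \<Longrightarrow> \<phi> A \<subseteq> \<phi> B"
  using closure_mono[of A "\<phi> B"] closure_subset_ground closure_idem by simp

lemma phi0_eq_UN:
  assumes "A \<subseteq> U"
  shows "phi0 U \<phi> A = (\<Union>a\<in>A. \<phi> {a})"
proof
  show "phi0 U \<phi> A \<subseteq> (\<Union>a\<in>A. \<phi> {a})"
    unfolding phi0_def
  proof (rule imp_closure_least)
    show "A \<subseteq> (\<Union>a\<in>A. \<phi> {a})"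
      using assms closure_incr[of "{_}"] by blast
    have "\<phi> {a} \<subseteq> \<phi> {b}" if "a \<in> \<phi> {b}" "b \<in> A" for a b
      using that assms closure_subset_closure[of "{a}" "{b}"] by blast
    then show "\<forall>(A', B)\<in>Sigma0 U \<phi>. A' \<subseteq> (\<Union>a\<in>A. \<phi> {a}) \<longrightarrow> B \<subseteq> (\<Union>a\<in>A. \<phi> {a})"
      by (fastforce simp: Sigma0_def)
  qed
  show "(\<Union>a\<in>A. \<phi> {a}) \<subseteq> phi0 U \<phi> A"
  proof (intro UN_least subsetI)
    fix a c assume "a \<in> A" "c \<in> \<phi> {a}"
    have a_in_phi0: "{a} \<subseteq> phi0 U \<phi> A"
      using \<open>a \<in> A\<close> imp_closure_incr[of A "Sigma0 U \<phi>"] unfolding phi0_def by blast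
    show "c \<in> phi0 U \<phi> A"
    proof (cases "c = a")
      case False
      then have "({a}, {c}) \<in> Sigma0 U \<phi>"
        using \<open>a \<in> A\<close> \<open>c \<in> \<phi> {a}\<close> assms closure_subset_ground[of "{a}"] unfolding Sigma0_def by blast
      from imp_closure_closed[OF this a_in_phi0[unfolded phi0_def]] show ?thesis
        unfolding phi0_def by simp
    qed (use a_in_phi0 in blast)
  qed
qed

lemma phi0_subset_ground: "A \<subseteq> U \<Longrightarrow> phi0 U \<phi> A \<subseteq> U"
  using closure_subset_ground[of "{_}"] by (auto simp: phi0_eq_UN)

lemma phi0_incr: "A \<subseteq> phi0 U \<phi> A"
  unfolding phi0_def by (rule imp_closure_incr)

lemma phi0_subset_phi0:
  assumes "A' \<subseteq> phi0 U \<phi> A" and "A \<subseteq> U"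
  shows "phi0 U \<phi> A' \<subseteq> phi0 U \<phi> A"
proof -
  have "\<phi> {a'} \<subseteq> \<phi> {a}" if "a' \<in> \<phi> {a}" "a \<in> A" for a a'
    using that assms(2) closure_subset_closure[of "{a'}" "{a}"] by blast
  moreover have "A' \<subseteq> U"
    using assms phi0_subset_ground by blast
  ultimately show ?thesis
    using assms(1) unfolding phi0_eq_UN[OF assms(2)] by (fastforce simp: phi0_eq_UN)
qed

lemma phi0_idem: "A \<subseteq> U \<Longrightarrow> phi0 U \<phi> (phi0 U \<phi> A) = phi0 U \<phi> A"
  by (simp add: phi0_incr phi0_subset_phi0 subset_antisym)

lemma closure_phi0:
  assumes "A \<subseteq> U"
  shows "\<phi> (phi0 U \<phi> A) = \<phi> A"
proof
  have "\<phi> {a} \<subseteq> \<phi> A" if "a \<in> A" for a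
    using that assms closure_mono[of "{a}" A] by blast
  then have "phi0 U \<phi> A \<subseteq> \<phi> A"
    by (auto simp: phi0_eq_UN assms)
  then show "\<phi> (phi0 U \<phi> A) \<subseteq> \<phi> A"
    using assms by (rule closure_subset_closure)
  show "\<phi> A \<subseteq> \<phi> (phi0 U \<phi> A)"
    using phi0_incr phi0_subset_ground[OF assms] by (rule closure_mono)
qed

lemma Un_fired_eq_closure:
  assumes valid: "valid_imps U \<phi> \<Sigma>" and "Y \<subseteq> U"
    and complete: "\<And>c. c \<in> \<phi> Y \<Longrightarrow> c \<notin> Y \<Longrightarrow> \<exists>A. (A, {c}) \<in> \<Sigma> \<and> A \<noteq> {} \<and> A \<subseteq> Y"
  shows "Y \<union> fired \<Sigma> Y = \<phi> Y"
proof
  have "B \<subseteq> \<phi> Y" if "(A, B) \<in> \<Sigma>" "A \<subseteq> Y" for A B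
  proof -
    have "B \<subseteq> \<phi> A" using that(1) valid by (auto simp: valid_imps_def)
    also have "\<phi> A \<subseteq> \<phi> Y" using that(2) \<open>Y \<subseteq> U\<close> by (rule closure_mono)
    finally show ?thesis .
  qed
  then show "Y \<union> fired \<Sigma> Y \<subseteq> \<phi> Y"
    using closure_incr[OF \<open>Y \<subseteq> U\<close>] unfolding fired_def by blast
  show "\<phi> Y \<subseteq> Y \<union> fired \<Sigma> Y"
  proof
    fix c assume "c \<in> \<phi> Y"
    show "c \<in> Y \<union> fired \<Sigma> Y"
    proof (cases "c \<in> Y")
      case False
      then obtain A where "(A, {c}) \<in> \<Sigma>" "A \<noteq> {}" "A \<subseteq> Y"
        using complete \<open>c \<in> \<phi> Y\<close> by blast
      then show ?thesis unfolding fired_def by blast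
    qed simp
  qed
qed

lemma exists_min_gen:
  assumes "finite S" and "S \<subseteq> U" and "c \<in> \<phi> S" and "c \<notin> S"
  shows "\<exists>A\<subseteq>S. min_gen U \<phi> A c"
proof -
  let ?gens = "{A. A \<subseteq> S \<and> c \<in> \<phi> A}"
  have "finite ?gens"
    using assms(1) by (rule finite_subset[rotated, OF finite_Pow_iff[THEN iffD2]]) auto
  moreover have "?gens \<noteq> {}"
    using assms(3) by blast
  ultimately obtain A where A: "A \<in> ?gens" and minimal: "\<forall>A'\<in>?gens. A' \<subseteq> A \<longrightarrow> A = A'"
    using finite_has_minimal[of ?gens] by blast
  then have "min_gen U \<phi> A c"
    using assms(2,4) unfolding min_gen_def by (auto simp: psubset_eq)
  with A show ?thesis by blast
qed

lemma min_gen_antichain: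
  assumes "min_gen U \<phi> A c" and "x \<in> A" "x' \<in> A" "x \<in> \<phi> {x'}"
  shows "x = x'"
proof (rule ccontr)
  assume "x \<noteq> x'"
  have AU: "A - {x} \<subseteq> U" using assms(1) by (auto simp: min_gen_def)
  have "\<phi> {x'} \<subseteq> \<phi> (A - {x})"
    using closure_mono[of "{x'}" "A - {x}"] AU assms(3) \<open>x \<noteq> x'\<close> by blast
  then have "A \<subseteq> \<phi> (A - {x})"
    using closure_incr[OF AU] assms(4) by blast
  then have "c \<in> \<phi> (A - {x})"
    using closure_subset_closure[OF _ AU] assms(1) by (auto simp: min_gen_def)
  then show False
    using assms(1,2) by (auto simp: min_gen_def)
qed

lemma canonical_direct_unit_basis_valid: "valid_imps U \<phi> (canonical_direct_unit_basis U \<phi>)"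
  by (auto simp: valid_imps_def canonical_direct_unit_basis_def min_gen_def)

lemma D_basis_valid: "valid_imps U \<phi> (D_basis U \<phi>)"
  by (auto simp: valid_imps_def D_basis_def Sigma0_def min_D_gen_def min_gen_def)

end

locale finite_standard_closure_space = closure_space +
  assumes finite: "finite U" and standard: "standard U \<phi>"
begin

lemma closure_empty: "\<phi> {} = {}"
proof -
  have "\<phi> {} \<subseteq> \<phi> {a} - {a}" if "a \<in> U" for a
    using that standard closure_mono[of "{}" "\<phi> {a} - {a}"] closure_subset_ground[of "{a}"]
    by (auto simp: standard_def is_closed_def)
  then show ?thesis
    using closure_subset_ground[of "{}"] by blast
qed

lemma min_gen_nonempty: "min_gen U \<phi> A c \<Longrightarrow> A \<noteq> {}"
  using closure_empty by (auto simp: min_gen_def)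

lemma singleton_closure_antisym:
  assumes "a \<in> U" "b \<in> U" "a \<in> \<phi> {b}" "b \<in> \<phi> {a}"
  shows "a = b"
  using assms standard closure_subset_closure[of "{a}" "{b}"] closure_subset_closure[of "{b}" "{a}"]
  by (auto simp: standard_def)

lemma min_gen_eq_if_phi0_eq:
  assumes "min_gen U \<phi> A c" and "min_gen U \<phi> A' c'" and "phi0 U \<phi> A = phi0 U \<phi> A'"
  shows "A = A'"
proof -
  have subset: "B' \<subseteq> B" if B: "min_gen U \<phi> B d" and B': "min_gen U \<phi> B' d'"
    and eq: "phi0 U \<phi> B = phi0 U \<phi> B'" for B B' d d'
  proof
    fix y assume "y \<in> B'"
    have BU: "B \<subseteq> U" and B'U: "B' \<subseteq> U"
      using B B' by (auto simp: min_gen_def)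
    have "y \<in> phi0 U \<phi> B"
      using \<open>y \<in> B'\<close> eq phi0_incr by blast
    then obtain a where "a \<in> B" and y_below_a: "y \<in> \<phi> {a}"
      by (auto simp: phi0_eq_UN BU)
    have "a \<in> phi0 U \<phi> B'"
      using \<open>a \<in> B\<close> eq phi0_incr by blast
    then obtain y' where "y' \<in> B'" and a_below_y': "a \<in> \<phi> {y'}"
      by (auto simp: phi0_eq_UN B'U)
    have "\<phi> {a} \<subseteq> \<phi> {y'}"
      using a_below_y' \<open>y' \<in> B'\<close> B'U by (intro closure_subset_closure) auto
    with y_below_a have "y = y'"
      using min_gen_antichain[OF B' \<open>y \<in> B'\<close> \<open>y' \<in> B'\<close>] by blast
    then have "a = y"
      using singleton_closure_antisym a_below_y' y_below_a \<open>a \<in> B\<close> \<open>y \<in> B'\<close> BU B'U by blast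
    with \<open>a \<in> B\<close> show "y \<in> B" by simp
  qed
  show ?thesis
    using subset[OF assms] subset[OF assms(2,1) assms(3)[symmetric]] by (rule subset_antisym[rotated])
qed

lemma exists_min_D_gen:
  assumes "Y \<subseteq> U" and "phi0 U \<phi> Y = Y" and "c \<in> \<phi> Y" and "c \<notin> Y"
  shows "\<exists>A\<subseteq>Y. min_D_gen U \<phi> A c"
proof -
  let ?gens = "{A. min_gen U \<phi> A c \<and> A \<subseteq> Y}"
  have "finite Y"
    using assms(1) finite by (rule finite_subset)
  then have "finite (phi0 U \<phi> ` ?gens)"
    by (intro finite_imageI finite_subset[of ?gens "Pow Y"]) auto
  moreover have "?gens \<noteq> {}"
    using exists_min_gen[OF \<open>finite Y\<close> assms(1,3,4)] by blast
  ultimately obtain M where "M \<in> phi0 U \<phi> ` ?gens"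
    and minimal: "\<forall>M'\<in>phi0 U \<phi> ` ?gens. M' \<subseteq> M \<longrightarrow> M = M'"
    using finite_has_minimal[of "phi0 U \<phi> ` ?gens"] by blast
  then obtain A where A: "min_gen U \<phi> A c" "A \<subseteq> Y" and M: "M = phi0 U \<phi> A"
    by blast
  have AU: "A \<subseteq> U"
    using A(2) assms(1) by blast
  have phi0_A: "phi0 U \<phi> A \<subseteq> Y"
    using phi0_subset_phi0[of A Y] A(2) assms(1,2) by simp
  with assms(4) have outside: "c \<notin> phi0 U \<phi> A"
    by blast
  have "2 \<le> card A"
  proof (rule ccontr)
    assume "\<not> 2 \<le> card A"
    moreover have "card A \<noteq> 0"
      using min_gen_nonempty[OF A(1)] finite_subset[OF AU finite] by simp
    ultimately obtain a where "A = {a}"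
      by (metis One_nat_def card_1_singletonE less_2_cases not_le)
    then have "c \<in> phi0 U \<phi> A"
      using A(1) AU by (simp add: phi0_eq_UN min_gen_def)
    with outside show False by blast
  qed
  moreover have "A' = A" if "min_gen U \<phi> A' c" "A' \<subseteq> phi0 U \<phi> A" for A'
  proof -
    have "A' \<subseteq> Y"
      using that(2) phi0_A by blast
    moreover have "phi0 U \<phi> A' \<subseteq> phi0 U \<phi> A"
      using that(2) AU by (rule phi0_subset_phi0)
    ultimately have "phi0 U \<phi> A = phi0 U \<phi> A'"
      using minimal that(1) M by blast
    then show ?thesis
      using min_gen_eq_if_phi0_eq[OF A(1) that(1)] by simp
  qed
  ultimately show ?thesis
    using A outside unfolding min_D_gen_def by blast
qed

lemma Un_fired_canonical_direct_unit_basis: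
  assumes "X \<subseteq> U"
  shows "X \<union> fired (canonical_direct_unit_basis U \<phi>) X = \<phi> X"
proof (rule Un_fired_eq_closure[OF canonical_direct_unit_basis_valid assms])
  fix c assume "c \<in> \<phi> X" "c \<notin> X"
  moreover have "finite X"
    using assms finite by (rule finite_subset)
  ultimately obtain A where "A \<subseteq> X" and A: "min_gen U \<phi> A c"
    using exists_min_gen[OF _ assms] by blast
  moreover have "c \<in> U"
    using \<open>c \<in> \<phi> X\<close> closure_subset_ground[OF assms] by blast
  ultimately show "\<exists>A. (A, {c}) \<in> canonical_direct_unit_basis U \<phi> \<and> A \<noteq> {} \<and> A \<subseteq> X"
    using min_gen_nonempty[OF A] unfolding canonical_direct_unit_basis_def by blast
qed

lemma Un_fired_D_basis:
  assumes "Y \<subseteq> U" and "phi0 U \<phi> Y = Y"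
  shows "Y \<union> fired (D_basis U \<phi>) Y = \<phi> Y"
proof (rule Un_fired_eq_closure[OF D_basis_valid assms(1)])
  fix c assume "c \<in> \<phi> Y" "c \<notin> Y"
  then obtain A where "A \<subseteq> Y" and A: "min_D_gen U \<phi> A c"
    using exists_min_D_gen[OF assms] by blast
  moreover have "c \<in> U"
    using \<open>c \<in> \<phi> Y\<close> closure_subset_ground[OF assms(1)] by blast
  moreover have "A \<noteq> {}"
    using A min_gen_nonempty unfolding min_D_gen_def by blast
  ultimately show "\<exists>A. (A, {c}) \<in> D_basis U \<phi> \<and> A \<noteq> {} \<and> A \<subseteq> Y"
    unfolding D_basis_def by blast
qed

end

theorem proposition2:
  fixes U :: "'a set" and \<phi> :: "'a set \<Rightarrow> 'a set" and X :: "'a set"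
  assumes "finite U" and "closure_operator U \<phi>" and "standard U \<phi>" and "X \<subseteq> U"
  shows "(\<forall>ord. distinct ord \<and> set ord = X \<longrightarrow>
            LinClosureDirect (canonical_direct_unit_basis U \<phi>) ord = \<phi> X) \<and>
         (\<forall>ord. distinct ord \<and> set ord = phi0 U \<phi> X \<longrightarrow>
            LinClosureDirect (D_basis U \<phi>) ord = \<phi> X)"
proof -
  interpret finite_standard_closure_space U \<phi>
    using assms(1-3) by unfold_locales
  have "LinClosureDirect (canonical_direct_unit_basis U \<phi>) ord = \<phi> X"
    if "distinct ord" "set ord = X" for ord
    using LinClosureDirect_eq[OF valid_imps_finite_premises[OF finite canonical_direct_unit_basis_valid]]
      Un_fired_canonical_direct_unit_basis assms(4) that by simp
  moreover have "LinClosureDirect (D_basis U \<phi>) ord = \<phi> X"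
    if "distinct ord" "set ord = phi0 U \<phi> X" for ord
    using LinClosureDirect_eq[OF valid_imps_finite_premises[OF finite D_basis_valid]]
      Un_fired_D_basis[OF phi0_subset_ground phi0_idem] closure_phi0 assms(4) that by simp
  ultimately show ?thesis by blast
qed

end
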